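(* Let $Q:\mathcal S\times\mathcal A\to\mathbb R$ be arbitrary and let $\pi_Q$ be a deterministic policy with $\pi_Q(s)\in\arg\max_aQ(s,a)$. Then $$\mathbb E_{s_0\sim\rho}\big(V^\star(s_0)-V^{\pi_Q}(s_0)\big)\le\mathbb E\Big[\sum_{t=0}^\infty\gamma^t\Big((Q^\star-Q)(s_t,\pi^\star(s_t))+(Q-Q^\star)(s_t,\pi_Q(s_t))\Big)\Big],$$ where the expectation is over $s_0\sim\rho$, $a_\tau=\pi_Q(s_\tau)$, $s_{\tau+1}\sim\hat P^{\pi_Q}_{s_\tau,a_\tau}$ with $\hat P^{\pi_Q}(s'|s,a)\propto P(s'|s,a)e^{-\beta V^{\pi_Q}(s')}$, and $\pi^\star(s)\in\arg\max_aQ^\star(s,a)$.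
   Context: $\mathcal S,\mathcal A$ finite; $P=\{P_{s,a}\}$ a transition kernel with $P_{s,a}$ a probability distribution on $\mathcal S$; $r:\mathcal S\times\mathcal A\to[0,1]$; $\gamma\in[0,1)$; $\rho$ a distribution on $\mathcal S$; $\beta>0$. For a policy $\pi$ (map from states to distributions on $\mathcal A$; a deterministic policy is identified with the chosen action $\pi(s)$), $V^\pi,Q^\pi$ are the unique solutions of $V^\pi(s)=\sum_a\pi(a|s)Q^\pi(s,a)$, $Q^\pi(s,a)=r(s,a)-\gamma\beta^{-1}\log\mathbb E_{s'\sim P_{s,a}}e^{-\beta V^\pi(s')}$, and $V^\star,Q^\star$ the unique solutions of $V^\star(s)=\max_aQ^\star(s,a)$, $Q^\star(s,a)=r(s,a)-\gamma\beta^{-1}\log\mathbb E_{s'\sim P_{s,a}}e^{-\beta V^\star(s')}$ (these are the risk-sensitive values for the entropic risk measure, equivalently KL-regularized robust values with penalty $\beta^{-1}\mathrm{KL}$). *)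

theory Defs
  imports Complex_Main
begin

text \<open>States: a finite type 's; actions: a finite type 'a.
  Transition kernel P s a s' = P(s' | s, a). A (stochastic) policy is
  pi :: 's => 'a => real with pi s a = pi(a|s).\<close>

definition soft_backup ::
  "('s::finite \<Rightarrow> 'a \<Rightarrow> 's \<Rightarrow> real) \<Rightarrow> ('s \<Rightarrow> 'a \<Rightarrow> real) \<Rightarrow> real \<Rightarrow> real
   \<Rightarrow> ('s \<Rightarrow> real) \<Rightarrow> 's \<Rightarrow> 'a \<Rightarrow> real" where
  "soft_backup P r \<gamma> \<beta> V s a =
     r s a - \<gamma> / \<beta> * ln (\<Sum>s'\<in>UNIV. P s a s' * exp (- \<beta> * V s'))"

definition Vpi ::
  "('s::finite \<Rightarrow> 'a::finite \<Rightarrow> 's \<Rightarrow> real) \<Rightarrow> ('s \<Rightarrow> 'a \<Rightarrow> real) \<Rightarrow> real \<Rightarrow> real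
   \<Rightarrow> ('s \<Rightarrow> 'a \<Rightarrow> real) \<Rightarrow> 's \<Rightarrow> real" where
  "Vpi P r \<gamma> \<beta> \<pi> =
     (THE V. \<forall>s. V s = (\<Sum>a\<in>UNIV. \<pi> s a * soft_backup P r \<gamma> \<beta> V s a))"

definition Qpi ::
  "('s::finite \<Rightarrow> 'a::finite \<Rightarrow> 's \<Rightarrow> real) \<Rightarrow> ('s \<Rightarrow> 'a \<Rightarrow> real) \<Rightarrow> real \<Rightarrow> real
   \<Rightarrow> ('s \<Rightarrow> 'a \<Rightarrow> real) \<Rightarrow> 's \<Rightarrow> 'a \<Rightarrow> real" where
  "Qpi P r \<gamma> \<beta> \<pi> = soft_backup P r \<gamma> \<beta> (Vpi P r \<gamma> \<beta> \<pi>)"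

definition Vstar ::
  "('s::finite \<Rightarrow> 'a::finite \<Rightarrow> 's \<Rightarrow> real) \<Rightarrow> ('s \<Rightarrow> 'a \<Rightarrow> real) \<Rightarrow> real \<Rightarrow> real
   \<Rightarrow> 's \<Rightarrow> real" where
  "Vstar P r \<gamma> \<beta> =
     (THE V. \<forall>s. V s = Max (range (soft_backup P r \<gamma> \<beta> V s)))"

definition Qstar ::
  "('s::finite \<Rightarrow> 'a::finite \<Rightarrow> 's \<Rightarrow> real) \<Rightarrow> ('s \<Rightarrow> 'a \<Rightarrow> real) \<Rightarrow> real \<Rightarrow> real
   \<Rightarrow> 's \<Rightarrow> 'a \<Rightarrow> real" where
  "Qstar P r \<gamma> \<beta> = soft_backup P r \<gamma> \<beta> (Vstar P r \<gamma> \<beta>)"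

definition det_policy :: "('s \<Rightarrow> 'a) \<Rightarrow> 's \<Rightarrow> 'a \<Rightarrow> real" where
  "det_policy f s a = (if a = f s then 1 else 0)"

definition tilted ::
  "('s::finite \<Rightarrow> 'a \<Rightarrow> 's \<Rightarrow> real) \<Rightarrow> real \<Rightarrow> ('s \<Rightarrow> real) \<Rightarrow> 's \<Rightarrow> 'a \<Rightarrow> 's \<Rightarrow> real" where
  "tilted P \<beta> V s a s' =
     P s a s' * exp (- \<beta> * V s') / (\<Sum>s''\<in>UNIV. P s a s'' * exp (- \<beta> * V s''))"

text \<open>Law of s_t of the chain s_0 ~ rho, a_t = f(s_t), s_{t+1} ~ K(. | s_t, a_t).\<close>
fun state_dist ::
  "('s::finite \<Rightarrow> real) \<Rightarrow> ('s \<Rightarrow> 'a \<Rightarrow> 's \<Rightarrow> real) \<Rightarrow> ('s \<Rightarrow> 'a) \<Rightarrow> nat \<Rightarrow> 's \<Rightarrow> real" where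
  "state_dist \<rho> K f 0 = \<rho>"
| "state_dist \<rho> K f (Suc t) = (\<lambda>s'. \<Sum>s\<in>UNIV. state_dist \<rho> K f t s * K s (f s) s')"

end

theory Submission
  imports Defs
begin

text \<open>Both soft Bellman operators are \<open>\<gamma>\<close>-contractions in the sup norm, which yields the
  fixed points V^pi and V^*. Put D = V^* - V^{pi_Q}. Since V^*(s) = Q^*(s, pi^*(s)),
  V^{pi_Q}(s) = Q^{pi_Q}(s, pi_Q(s)) and Q(s, pi^*(s)) \<le> Q(s, pi_Q(s)), we have
  D(s) \<le> g(s) + (Q^* - Q^{pi_Q})(s, pi_Q(s)), where g is the integrand of the bound. Jensen's
  inequality for exp, under the kernel tilted by V^{pi_Q}, bounds the last term by \<open>\<gamma>\<close> times the
  tilted expectation of D. Unrolling D \<le> g + \<open>\<gamma>\<close> P^ D along the chain driven by pi_Q, the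
  remainder \<open>\<gamma>\<close>^n E[D(s_n)] vanishes.\<close>

definition sup_contraction :: "real \<Rightarrow> (('s \<Rightarrow> real) \<Rightarrow> 's \<Rightarrow> real) \<Rightarrow> bool" where
  "sup_contraction \<gamma> F \<longleftrightarrow>
     (\<forall>x y c. (\<forall>s. \<bar>x s - y s\<bar> \<le> c) \<longrightarrow> (\<forall>s. \<bar>F x s - F y s\<bar> \<le> \<gamma> * c))"

lemma sup_contractionD:
  "sup_contraction \<gamma> F \<Longrightarrow> (\<And>s. \<bar>x s - y s\<bar> \<le> c) \<Longrightarrow> \<bar>F x s - F y s\<bar> \<le> \<gamma> * c"
  unfolding sup_contraction_def by blast

lemma sup_contraction_iterate_step:
  fixes F :: "('s::finite \<Rightarrow> real) \<Rightarrow> 's \<Rightarrow> real"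
  assumes "sup_contraction \<gamma> F"
  shows "\<bar>(F ^^ Suc n) x s - (F ^^ n) x s\<bar> \<le> \<gamma> ^ n * Max (range (\<lambda>s. \<bar>F x s - x s\<bar>))"
proof (induction n arbitrary: s)
  case 0
  show ?case
    by (simp add: Max_ge)
next
  case (Suc n)
  then have "\<bar>F ((F ^^ Suc n) x) s - F ((F ^^ n) x) s\<bar> \<le> \<gamma> * (\<gamma> ^ n * Max (range (\<lambda>s. \<bar>F x s - x s\<bar>)))"
    by (intro sup_contractionD[OF assms])
  then show ?case by simp
qed

lemma sup_contraction_iterates_converge:
  fixes F :: "('s::finite \<Rightarrow> real) \<Rightarrow> 's \<Rightarrow> real"
  assumes "sup_contraction \<gamma> F" "0 \<le> \<gamma>" "\<gamma> < 1"
  shows "convergent (\<lambda>n. (F ^^ n) x s)"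
proof -
  let ?d = "\<lambda>k. (F ^^ Suc k) x s - (F ^^ k) x s"
  have "summable (\<lambda>k. \<gamma> ^ k * Max (range (\<lambda>s. \<bar>F x s - x s\<bar>)))"
    using assms by (intro summable_mult2 summable_geometric) auto
  then have "summable ?d"
    by (rule summable_comparison_test[rotated]) (use sup_contraction_iterate_step[OF assms(1)] in auto)
  then have "(\<lambda>n. x s + (\<Sum>k<n. ?d k)) \<longlonglongrightarrow> x s + (\<Sum>k. ?d k)"
    by (intro tendsto_add tendsto_const summable_LIMSEQ)
  moreover have "x s + (\<Sum>k<n. ?d k) = (F ^^ n) x s" for n
    using sum_lessThan_telescope[of "\<lambda>k. (F ^^ k) x s" n] by simp
  ultimately show ?thesis
    by (simp add: convergentI)
qed

lemma sup_contraction_pointwise_limit: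
  fixes F :: "('s::finite \<Rightarrow> real) \<Rightarrow> 's \<Rightarrow> real"
  assumes "sup_contraction \<gamma> F" and V: "\<And>s. (\<lambda>n. V n s) \<longlonglongrightarrow> L s"
  shows "(\<lambda>n. F (V n) s) \<longlonglongrightarrow> F L s"
proof -
  let ?e = "\<lambda>n. \<Sum>s'\<in>UNIV. \<bar>V n s' - L s'\<bar>"
  have lim: "?e \<longlonglongrightarrow> 0"
    using V by (intro tendsto_null_sum) (rule tendsto_rabs_zero, rule LIM_zero)
  have bound: "norm (F (V n) s - F L s) \<le> norm (?e n) * \<gamma>" for n
  proof -
    have "\<bar>V n s' - L s'\<bar> \<le> ?e n" for s'
      by (rule member_le_sum) auto
    then have "\<bar>F (V n) s - F L s\<bar> \<le> \<gamma> * ?e n"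
      by (rule sup_contractionD[OF assms(1)])
    then show ?thesis
      by (simp add: mult.commute sum_nonneg)
  qed
  have "(\<lambda>n. F (V n) s - F L s) \<longlonglongrightarrow> 0"
    using bound by (intro tendsto_0_le[OF lim, where K = \<gamma>] always_eventually allI)
  then show ?thesis
    by (simp add: LIM_zero_iff)
qed

lemma sup_contraction_fixed_point_unique:
  fixes F :: "('s::finite \<Rightarrow> real) \<Rightarrow> 's \<Rightarrow> real"
  assumes "sup_contraction \<gamma> F" "\<gamma> < 1"
    and x: "\<And>s. x s = F x s" and y: "\<And>s. y s = F y s"
  shows "x = y"
proof -
  define M where "M = Max (range (\<lambda>s. \<bar>x s - y s\<bar>))"
  have M: "\<bar>x s - y s\<bar> \<le> M" for s
    by (simp add: M_def)
  have "\<bar>F x s - F y s\<bar> \<le> \<gamma> * M" for s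
    using sup_contractionD[OF assms(1) M] .
  then have "\<bar>x s - y s\<bar> \<le> \<gamma> * M" for s
    using x[of s] y[of s] by simp
  moreover have "M \<in> range (\<lambda>s. \<bar>x s - y s\<bar>)"
    unfolding M_def by (rule Max_in) auto
  ultimately have "M \<le> \<gamma> * M"
    by blast
  then have "(1 - \<gamma>) * M \<le> 0"
    by (simp add: algebra_simps)
  then have "M \<le> 0"
    using assms(2) by (simp add: mult_le_0_iff)
  then have "\<bar>x s - y s\<bar> \<le> 0" for s
    using M[of s] by linarith
  then show ?thesis
    by (intro ext) simp
qed

lemma sup_contraction_unique_fixed_point:
  fixes F :: "('s::finite \<Rightarrow> real) \<Rightarrow> 's \<Rightarrow> real"
  assumes "sup_contraction \<gamma> F" "0 \<le> \<gamma>" "\<gamma> < 1"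
  shows "\<exists>!V. \<forall>s. V s = F V s"
proof -
  define L where "L s = lim (\<lambda>n. (F ^^ n) (\<lambda>_. 0) s)" for s
  have conv: "(\<lambda>n. (F ^^ n) (\<lambda>_. 0) s) \<longlonglongrightarrow> L s" for s
    unfolding L_def using sup_contraction_iterates_converge[OF assms]
    by (simp add: convergent_LIMSEQ_iff)
  have "L s = F L s" for s
  proof (rule LIMSEQ_unique)
    show "(\<lambda>n. (F ^^ Suc n) (\<lambda>_. 0) s) \<longlonglongrightarrow> L s"
      using conv by (rule LIMSEQ_Suc)
    show "(\<lambda>n. (F ^^ Suc n) (\<lambda>_. 0) s) \<longlonglongrightarrow> F L s"
      using sup_contraction_pointwise_limit[OF assms(1) conv] by simp
  qed
  then show ?thesis
    using sup_contraction_fixed_point_unique[OF assms(1,3)] by blast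
qed

lemma Max_range_diff_le:
  fixes f g :: "'a::finite \<Rightarrow> real"
  assumes "\<And>a. \<bar>f a - g a\<bar> \<le> d"
  shows "\<bar>Max (range f) - Max (range g)\<bar> \<le> d"
proof -
  have Max_le: "Max (range f) \<le> Max (range g) + d" if "\<And>a. \<bar>f a - g a\<bar> \<le> d"
    for f g :: "'a \<Rightarrow> real"
  proof -
    have "Max (range f) \<in> range f"
      by (rule Max_in) auto
    then obtain a where a: "Max (range f) = f a"
      by blast
    have "f a \<le> g a + d"
      using that[of a] by linarith
    also have "g a \<le> Max (range g)"
      by simp
    finally show ?thesis
      using a by simp
  qed
  have "Max (range f) \<le> Max (range g) + d"
    using assms by (rule Max_le)
  moreover have "Max (range g) \<le> Max (range f) + d"
    using assms by (intro Max_le) (simp add: abs_minus_commute)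
  ultimately show ?thesis
    by linarith
qed

lemma sum_det_policy:
  fixes f :: "'s \<Rightarrow> 'a::finite"
  shows "(\<Sum>a\<in>UNIV. det_policy f s a * q a) = q (f s)"
proof -
  have "(\<Sum>a\<in>UNIV. det_policy f s a * q a) = (\<Sum>a\<in>UNIV. if a = f s then q a else 0)"
    by (rule sum.cong) (simp_all add: det_policy_def)
  then show ?thesis
    by simp
qed

lemma sum_mult_exp_pos:
  fixes p :: "'s::finite \<Rightarrow> real"
  assumes "\<And>s. 0 \<le> p s" "(\<Sum>s\<in>UNIV. p s) = 1"
  shows "0 < (\<Sum>s\<in>UNIV. p s * exp (h s))"
proof -
  obtain s0 where "p s0 \<noteq> 0"
    using assms(2) by (metis (mono_tags) sum.neutral zero_neq_one)
  then have "0 < p s0 * exp (h s0)"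
    using assms(1)[of s0] by simp
  also have "\<dots> \<le> (\<Sum>s\<in>UNIV. p s * exp (h s))"
    by (rule member_le_sum) (simp_all add: assms(1))
  finally show ?thesis .
qed

lemma exp_weighted_mean_le:
  fixes w :: "'s::finite \<Rightarrow> real"
  assumes w: "\<And>s. 0 \<le> w s" and B: "0 < (\<Sum>s\<in>UNIV. w s)"
  shows "exp ((\<Sum>s\<in>UNIV. w s * f s) / (\<Sum>s\<in>UNIV. w s)) * (\<Sum>s\<in>UNIV. w s)
    \<le> (\<Sum>s\<in>UNIV. w s * exp (f s))"
proof -
  define B where "B = (\<Sum>s\<in>UNIV. w s)"
  define m where "m = (\<Sum>s\<in>UNIV. w s * f s) / B"
  \<comment> \<open>Jensen: integrate the tangent line \<open>exp m * (1 + (t - m)) \<le> exp t\<close> against \<open>w\<close>.\<close>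
  have "w s * (exp m * (1 + (f s - m))) \<le> w s * exp (f s)" for s
  proof -
    have "exp m * (1 + (f s - m)) \<le> exp m * exp (f s - m)"
      using exp_ge_add_one_self[of "f s - m"] by (intro mult_left_mono) auto
    then show ?thesis
      using w[of s] by (simp add: mult_left_mono exp_diff)
  qed
  then have "(\<Sum>s\<in>UNIV. w s * (exp m * (1 + (f s - m)))) \<le> (\<Sum>s\<in>UNIV. w s * exp (f s))"
    by (rule sum_mono)
  moreover have "(\<Sum>s\<in>UNIV. w s * (exp m * (1 + (f s - m))))
      = exp m * (B + (\<Sum>s\<in>UNIV. w s * f s) - m * B)"
    by (simp add: B_def algebra_simps sum.distrib sum_subtractf sum_distrib_left sum_distrib_right)
  moreover have "m * B = (\<Sum>s\<in>UNIV. w s * f s)"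
    using B by (simp add: m_def B_def)
  ultimately show ?thesis
    by (simp add: m_def B_def)
qed

lemma state_dist_nonneg:
  assumes "\<And>s. 0 \<le> \<rho> s" and "\<And>s a s'. 0 \<le> K s a s'"
  shows "0 \<le> state_dist \<rho> K f t s"
  using assms by (induction t arbitrary: s) (simp_all add: sum_nonneg)

lemma state_dist_sum_eq_1:
  assumes "(\<Sum>s\<in>UNIV. \<rho> s) = 1" and "\<And>s a. (\<Sum>s'\<in>UNIV. K s a s') = 1"
  shows "(\<Sum>s\<in>UNIV. state_dist \<rho> K f t s) = 1"
proof (induction t)
  case 0
  show ?case
    using assms(1) by simp
next
  case (Suc t)
  have "(\<Sum>s'\<in>UNIV. state_dist \<rho> K f (Suc t) s')
      = (\<Sum>s\<in>UNIV. state_dist \<rho> K f t s * (\<Sum>s'\<in>UNIV. K s (f s) s'))"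
    by (simp add: sum_distrib_left) (rule sum.swap)
  then show ?case
    using Suc assms(2) by simp
qed

lemma state_dist_Suc_expectation:
  "(\<Sum>s'\<in>UNIV. state_dist \<rho> K f (Suc t) s' * h s')
     = (\<Sum>s\<in>UNIV. state_dist \<rho> K f t s * (\<Sum>s'\<in>UNIV. K s (f s) s' * h s'))"
  by (simp add: sum_distrib_left sum_distrib_right mult.assoc) (rule sum.swap)

lemma abs_expectation_le:
  fixes \<mu> :: "'s::finite \<Rightarrow> real"
  assumes "\<And>s. 0 \<le> \<mu> s" and "(\<Sum>s\<in>UNIV. \<mu> s) = 1"
  shows "\<bar>\<Sum>s\<in>UNIV. \<mu> s * h s\<bar> \<le> (\<Sum>s\<in>UNIV. \<bar>h s\<bar>)"
proof -
  have "\<mu> s \<le> (\<Sum>s\<in>UNIV. \<mu> s)" for s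
    by (rule member_le_sum) (simp_all add: assms(1))
  then have "\<mu> s * \<bar>h s\<bar> \<le> \<bar>h s\<bar>" for s
    using assms by (intro mult_left_le_one_le) simp_all
  then have "\<bar>\<mu> s * h s\<bar> \<le> \<bar>h s\<bar>" for s
    using assms(1)[of s] by (simp add: abs_mult)
  then have "(\<Sum>s\<in>UNIV. \<bar>\<mu> s * h s\<bar>) \<le> (\<Sum>s\<in>UNIV. \<bar>h s\<bar>)"
    by (rule sum_mono)
  with sum_abs show ?thesis
    by (rule order_trans)
qed

lemma expectation_le_discounted_partial_sum:
  assumes "\<And>s. 0 \<le> \<rho> s" and "\<And>s a s'. 0 \<le> K s a s'" and "0 \<le> \<gamma>"
    and step: "\<And>s. D s \<le> g s + \<gamma> * (\<Sum>s'\<in>UNIV. K s (f s) s' * D s')"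
  shows "(\<Sum>s\<in>UNIV. \<rho> s * D s)
    \<le> (\<Sum>t<n. \<gamma> ^ t * (\<Sum>s\<in>UNIV. state_dist \<rho> K f t s * g s))
       + \<gamma> ^ n * (\<Sum>s\<in>UNIV. state_dist \<rho> K f n s * D s)"
proof (induction n)
  case 0
  show ?case
    by simp
next
  case (Suc n)
  let ?\<mu> = "state_dist \<rho> K f n"
  have "(\<Sum>s\<in>UNIV. ?\<mu> s * D s)
      \<le> (\<Sum>s\<in>UNIV. ?\<mu> s * (g s + \<gamma> * (\<Sum>s'\<in>UNIV. K s (f s) s' * D s')))"
    using step state_dist_nonneg[OF assms(1,2)] by (intro sum_mono mult_left_mono)
  also have "\<dots> = (\<Sum>s\<in>UNIV. ?\<mu> s * g s)
      + \<gamma> * (\<Sum>s\<in>UNIV. ?\<mu> s * (\<Sum>s'\<in>UNIV. K s (f s) s' * D s'))"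
    by (simp add: algebra_simps sum.distrib sum_distrib_left)
  also have "(\<Sum>s\<in>UNIV. ?\<mu> s * (\<Sum>s'\<in>UNIV. K s (f s) s' * D s'))
      = (\<Sum>s\<in>UNIV. state_dist \<rho> K f (Suc n) s * D s)"
    by (rule state_dist_Suc_expectation[symmetric])
  finally have "\<gamma> ^ n * (\<Sum>s\<in>UNIV. ?\<mu> s * D s)
      \<le> \<gamma> ^ n * ((\<Sum>s\<in>UNIV. ?\<mu> s * g s) + \<gamma> * (\<Sum>s\<in>UNIV. state_dist \<rho> K f (Suc n) s * D s))"
    using assms(3) by (intro mult_left_mono) auto
  then show ?case
    using Suc by (simp add: algebra_simps)
qed

lemma expectation_le_discounted_sum:
  assumes \<rho>: "\<And>s. 0 \<le> \<rho> s" "(\<Sum>s\<in>UNIV. \<rho> s) = 1"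
    and K: "\<And>s a s'. 0 \<le> K s a s'" "\<And>s a. (\<Sum>s'\<in>UNIV. K s a s') = 1"
    and \<gamma>: "0 \<le> \<gamma>" "\<gamma> < 1"
    and step: "\<And>s. D s \<le> g s + \<gamma> * (\<Sum>s'\<in>UNIV. K s (f s) s' * D s')"
  shows "(\<Sum>s\<in>UNIV. \<rho> s * D s) \<le> (\<Sum>t. \<gamma> ^ t * (\<Sum>s\<in>UNIV. state_dist \<rho> K f t s * g s))"
proof -
  define E where "E t h = (\<Sum>s\<in>UNIV. state_dist \<rho> K f t s * h s)" for t h
  have E_le: "\<bar>\<gamma> ^ t * E t h\<bar> \<le> \<gamma> ^ t * (\<Sum>s\<in>UNIV. \<bar>h s\<bar>)" for t h
    unfolding E_def using \<gamma>(1)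
    by (simp add: abs_mult mult_left_mono abs_expectation_le state_dist_nonneg state_dist_sum_eq_1 \<rho> K)
  have geometric: "(\<lambda>t. \<gamma> ^ t * c) \<longlonglongrightarrow> 0" "summable (\<lambda>t. \<gamma> ^ t * c)" for c
    using \<gamma> by (auto intro!: tendsto_mult_left_zero LIMSEQ_power_zero summable_mult2 summable_geometric)
  have "summable (\<lambda>t. \<gamma> ^ t * E t g)"
    using E_le by (intro summable_comparison_test[OF _ geometric(2)]) auto
  moreover have "(\<lambda>t. \<gamma> ^ t * E t D) \<longlonglongrightarrow> 0"
    using E_le by (intro tendsto_0_le[OF geometric(1)[of "\<Sum>s\<in>UNIV. \<bar>D s\<bar>"], where K = 1] always_eventually allI)
       (simp, meson abs_ge_self order_trans)
  ultimately have "(\<lambda>n. (\<Sum>t<n. \<gamma> ^ t * E t g) + \<gamma> ^ n * E n D) \<longlonglongrightarrow> (\<Sum>t. \<gamma> ^ t * E t g) + 0"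
    by (intro tendsto_add summable_LIMSEQ)
  moreover have "(\<Sum>s\<in>UNIV. \<rho> s * D s) \<le> (\<Sum>t<n. \<gamma> ^ t * E t g) + \<gamma> ^ n * E n D" for n
    unfolding E_def using \<rho>(1) K(1) \<gamma>(1) step by (rule expectation_le_discounted_partial_sum)
  ultimately show ?thesis
    unfolding E_def by (intro LIMSEQ_le_const) auto
qed

locale entropic_mdp =
  fixes P :: "'s::finite \<Rightarrow> 'a::finite \<Rightarrow> 's \<Rightarrow> real"
    and r :: "'s \<Rightarrow> 'a \<Rightarrow> real"
    and \<gamma> \<beta> :: real
  assumes P_nonneg: "\<And>s a s'. 0 \<le> P s a s'"
    and P_sum: "\<And>s a. (\<Sum>s'\<in>UNIV. P s a s') = 1"
    and gamma_nonneg: "0 \<le> \<gamma>"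
    and gamma_less_1: "\<gamma> < 1"
    and beta_pos: "0 < \<beta>"
begin

lemma partition_pos: "0 < (\<Sum>s'\<in>UNIV. P s a s' * exp (h s'))"
  by (rule sum_mult_exp_pos) (simp_all add: P_nonneg P_sum)

lemma tilted_nonneg: "0 \<le> tilted P \<beta> V s a s'"
  using partition_pos[of s a "\<lambda>s'. - \<beta> * V s'"] by (simp add: tilted_def P_nonneg)

lemma tilted_sum_eq_1: "(\<Sum>s'\<in>UNIV. tilted P \<beta> V s a s') = 1"
  using partition_pos[of s a "\<lambda>s'. - \<beta> * V s'"]
  by (simp add: tilted_def sum_divide_distrib[symmetric])

lemma soft_backup_diff:
  "soft_backup P r \<gamma> \<beta> x s a - soft_backup P r \<gamma> \<beta> y s a
     = \<gamma> / \<beta> * (ln (\<Sum>s'\<in>UNIV. P s a s' * exp (- \<beta> * y s'))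
                - ln (\<Sum>s'\<in>UNIV. P s a s' * exp (- \<beta> * x s')))"
  by (simp add: soft_backup_def algebra_simps)

lemma ln_partition_shift_le:
  assumes "\<And>s'. y s' - x s' \<le> c"
  shows "ln (\<Sum>s'\<in>UNIV. P s a s' * exp (- \<beta> * x s'))
    \<le> \<beta> * c + ln (\<Sum>s'\<in>UNIV. P s a s' * exp (- \<beta> * y s'))"
proof -
  have Zx: "0 < (\<Sum>s'\<in>UNIV. P s a s' * exp (- \<beta> * x s'))"
    and Zy: "0 < (\<Sum>s'\<in>UNIV. P s a s' * exp (- \<beta> * y s'))"
    by (rule partition_pos)+
  have "P s a s' * exp (- \<beta> * x s') \<le> exp (\<beta> * c) * (P s a s' * exp (- \<beta> * y s'))" for s'
  proof -
    have "- \<beta> * x s' \<le> \<beta> * c + - \<beta> * y s'"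
      using assms[of s'] beta_pos mult_left_mono[of "y s' - x s'" c \<beta>] by (simp add: algebra_simps)
    then have "exp (- \<beta> * x s') \<le> exp (\<beta> * c) * exp (- \<beta> * y s')"
      by (simp add: exp_add[symmetric])
    then show ?thesis
      using P_nonneg[of s a s'] by (simp add: mult_left_mono mult.left_commute)
  qed
  then have "(\<Sum>s'\<in>UNIV. P s a s' * exp (- \<beta> * x s'))
      \<le> exp (\<beta> * c) * (\<Sum>s'\<in>UNIV. P s a s' * exp (- \<beta> * y s'))"
    by (simp add: sum_distrib_left sum_mono)
  then have "ln (\<Sum>s'\<in>UNIV. P s a s' * exp (- \<beta> * x s'))
      \<le> ln (exp (\<beta> * c) * (\<Sum>s'\<in>UNIV. P s a s' * exp (- \<beta> * y s')))"
    using Zx Zy by simp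
  also have "\<dots> = \<beta> * c + ln (\<Sum>s'\<in>UNIV. P s a s' * exp (- \<beta> * y s'))"
    using Zy by (simp add: ln_mult)
  finally show ?thesis .
qed

lemma soft_backup_dist_le:
  assumes "\<And>s'. \<bar>x s' - y s'\<bar> \<le> c"
  shows "\<bar>soft_backup P r \<gamma> \<beta> x s a - soft_backup P r \<gamma> \<beta> y s a\<bar> \<le> \<gamma> * c"
proof -
  let ?L = "\<lambda>V. ln (\<Sum>s'\<in>UNIV. P s a s' * exp (- \<beta> * V s'))"
  have "?L x \<le> \<beta> * c + ?L y" "?L y \<le> \<beta> * c + ?L x"
    using assms by (intro ln_partition_shift_le; simp add: abs_le_iff)+
  then have "\<bar>?L y - ?L x\<bar> \<le> \<beta> * c"
    by linarith
  then have "\<gamma> / \<beta> * \<bar>?L y - ?L x\<bar> \<le> \<gamma> / \<beta> * (\<beta> * c)"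
    using gamma_nonneg beta_pos by (intro mult_left_mono) auto
  then show ?thesis
    using gamma_nonneg beta_pos by (simp add: soft_backup_diff abs_mult)
qed

lemma soft_backup_diff_le_tilted:
  "soft_backup P r \<gamma> \<beta> x s a - soft_backup P r \<gamma> \<beta> y s a
     \<le> \<gamma> * (\<Sum>s'\<in>UNIV. tilted P \<beta> y s a s' * (x s' - y s'))"
proof -
  define w where "w s' = P s a s' * exp (- \<beta> * y s')" for s'
  define m where "m = (\<Sum>s'\<in>UNIV. tilted P \<beta> y s a s' * (x s' - y s'))"
  have B: "0 < (\<Sum>s'\<in>UNIV. w s')"
    unfolding w_def by (rule partition_pos)
  have "(\<Sum>s'\<in>UNIV. w s' * (- \<beta> * (x s' - y s'))) / (\<Sum>s'\<in>UNIV. w s') = - \<beta> * m"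
    by (simp add: m_def tilted_def w_def sum_divide_distrib sum_distrib_left algebra_simps)
  then have "exp (- \<beta> * m) * (\<Sum>s'\<in>UNIV. w s')
      \<le> (\<Sum>s'\<in>UNIV. w s' * exp (- \<beta> * (x s' - y s')))"
    using exp_weighted_mean_le[of w "\<lambda>s'. - \<beta> * (x s' - y s')", OF _ B]
    by (simp add: w_def P_nonneg)
  also have "\<dots> = (\<Sum>s'\<in>UNIV. P s a s' * exp (- \<beta> * x s'))"
    by (intro sum.cong) (simp_all add: w_def exp_add[symmetric] algebra_simps)
  finally have "ln (exp (- \<beta> * m) * (\<Sum>s'\<in>UNIV. w s'))
      \<le> ln (\<Sum>s'\<in>UNIV. P s a s' * exp (- \<beta> * x s'))"
    using B partition_pos[of s a "\<lambda>s'. - \<beta> * x s'"] by (subst ln_le_cancel_iff) simp_all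
  then have "- \<beta> * m + ln (\<Sum>s'\<in>UNIV. w s') \<le> ln (\<Sum>s'\<in>UNIV. P s a s' * exp (- \<beta> * x s'))"
    using B by (simp add: ln_mult)
  then have "\<gamma> / \<beta> * (ln (\<Sum>s'\<in>UNIV. w s') - ln (\<Sum>s'\<in>UNIV. P s a s' * exp (- \<beta> * x s')))
      \<le> \<gamma> / \<beta> * (\<beta> * m)"
    using gamma_nonneg beta_pos by (intro mult_left_mono) simp_all
  then show ?thesis
    using beta_pos by (simp add: soft_backup_diff w_def m_def)
qed

lemma soft_backup_sup_contraction: "sup_contraction \<gamma> (\<lambda>V s. soft_backup P r \<gamma> \<beta> V s (f s))"
  unfolding sup_contraction_def using soft_backup_dist_le by blast

lemma soft_backup_Max_sup_contraction:
  "sup_contraction \<gamma> (\<lambda>V s. Max (range (soft_backup P r \<gamma> \<beta> V s)))"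
  unfolding sup_contraction_def by (blast intro: Max_range_diff_le soft_backup_dist_le)

lemma Vpi_det_policy_fixed_point:
  "Vpi P r \<gamma> \<beta> (det_policy f) s = Qpi P r \<gamma> \<beta> (det_policy f) s (f s)"
proof -
  have "\<exists>!V. \<forall>s. V s = soft_backup P r \<gamma> \<beta> V s (f s)"
    by (rule sup_contraction_unique_fixed_point[OF soft_backup_sup_contraction gamma_nonneg gamma_less_1])
  then have "\<forall>s. (THE V. \<forall>s. V s = soft_backup P r \<gamma> \<beta> V s (f s)) s
      = soft_backup P r \<gamma> \<beta> (THE V. \<forall>s. V s = soft_backup P r \<gamma> \<beta> V s (f s)) s (f s)"
    by (rule theI')
  then show ?thesis
    by (simp add: Qpi_def Vpi_def sum_det_policy)
qed

lemma Vstar_fixed_point: "Vstar P r \<gamma> \<beta> s = Max (range (Qstar P r \<gamma> \<beta> s))"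
proof -
  have "\<exists>!V. \<forall>s. V s = Max (range (soft_backup P r \<gamma> \<beta> V s))"
    by (rule sup_contraction_unique_fixed_point[OF soft_backup_Max_sup_contraction gamma_nonneg gamma_less_1])
  then have "\<forall>s. (THE V. \<forall>s. V s = Max (range (soft_backup P r \<gamma> \<beta> V s))) s
      = Max (range (soft_backup P r \<gamma> \<beta> (THE V. \<forall>s. V s = Max (range (soft_backup P r \<gamma> \<beta> V s))) s))"
    by (rule theI')
  then show ?thesis
    by (simp add: Qstar_def Vstar_def)
qed

lemma Vstar_eq_Qstar_greedy:
  assumes "\<And>a. Qstar P r \<gamma> \<beta> s a \<le> Qstar P r \<gamma> \<beta> s (\<pi> s)"
  shows "Vstar P r \<gamma> \<beta> s = Qstar P r \<gamma> \<beta> s (\<pi> s)"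
  unfolding Vstar_fixed_point using assms by (intro Max_eqI) auto

end

theorem mainTheorem12:
  fixes P :: "'s::finite \<Rightarrow> 'a::finite \<Rightarrow> 's \<Rightarrow> real"
    and r :: "'s \<Rightarrow> 'a \<Rightarrow> real"
    and \<gamma> \<beta> :: real
    and \<rho> :: "'s \<Rightarrow> real"
    and Q :: "'s \<Rightarrow> 'a \<Rightarrow> real"
    and \<pi>Q \<pi>star :: "'s \<Rightarrow> 'a"
  assumes P_nonneg: "\<And>s a s'. 0 \<le> P s a s'"
    and P_sum: "\<And>s a. (\<Sum>s'\<in>UNIV. P s a s') = 1"
    and r_bounds: "\<And>s a. 0 \<le> r s a \<and> r s a \<le> 1"
    and gamma: "0 \<le> \<gamma>" "\<gamma> < 1"
    and rho_nonneg: "\<And>s. 0 \<le> \<rho> s"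
    and rho_sum: "(\<Sum>s\<in>UNIV. \<rho> s) = 1"
    and beta: "0 < \<beta>"
    and piQ_greedy: "\<And>s a. Q s a \<le> Q s (\<pi>Q s)"
    and pistar_greedy: "\<And>s a. Qstar P r \<gamma> \<beta> s a \<le> Qstar P r \<gamma> \<beta> s (\<pi>star s)"
  shows "(\<Sum>s\<in>UNIV. \<rho> s * (Vstar P r \<gamma> \<beta> s - Vpi P r \<gamma> \<beta> (det_policy \<pi>Q) s))
     \<le> (\<Sum>t. \<gamma> ^ t *
           (\<Sum>s\<in>UNIV. state_dist \<rho> (tilted P \<beta> (Vpi P r \<gamma> \<beta> (det_policy \<pi>Q))) \<pi>Q t s *
              ((Qstar P r \<gamma> \<beta> s (\<pi>star s) - Q s (\<pi>star s))
               + (Q s (\<pi>Q s) - Qstar P r \<gamma> \<beta> s (\<pi>Q s)))))"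
proof -
  interpret entropic_mdp P r \<gamma> \<beta>
    using P_nonneg P_sum gamma beta by unfold_locales
  define V\<pi> where "V\<pi> = Vpi P r \<gamma> \<beta> (det_policy \<pi>Q)"
  define Q\<pi> where "Q\<pi> = Qpi P r \<gamma> \<beta> (det_policy \<pi>Q)"
  define Qs where "Qs = Qstar P r \<gamma> \<beta>"
  have "Vstar P r \<gamma> \<beta> s - V\<pi> s
      \<le> ((Qs s (\<pi>star s) - Q s (\<pi>star s)) + (Q s (\<pi>Q s) - Qs s (\<pi>Q s)))
        + \<gamma> * (\<Sum>s'\<in>UNIV. tilted P \<beta> V\<pi> s (\<pi>Q s) s' * (Vstar P r \<gamma> \<beta> s' - V\<pi> s'))" for s
  proof -
    have "Vstar P r \<gamma> \<beta> s - V\<pi> s = (Qs s (\<pi>star s) - Qs s (\<pi>Q s)) + (Qs s (\<pi>Q s) - Q\<pi> s (\<pi>Q s))"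
      using Vstar_eq_Qstar_greedy[where \<pi> = \<pi>star, OF pistar_greedy] Vpi_det_policy_fixed_point
      by (simp add: V\<pi>_def Q\<pi>_def Qs_def)
    moreover have "Qs s (\<pi>Q s) - Q\<pi> s (\<pi>Q s)
        \<le> \<gamma> * (\<Sum>s'\<in>UNIV. tilted P \<beta> V\<pi> s (\<pi>Q s) s' * (Vstar P r \<gamma> \<beta> s' - V\<pi> s'))"
      unfolding Qs_def Q\<pi>_def Qstar_def Qpi_def V\<pi>_def by (rule soft_backup_diff_le_tilted)
    moreover have "Q s (\<pi>star s) \<le> Q s (\<pi>Q s)"
      by (rule piQ_greedy)
    ultimately show ?thesis
      by linarith
  qed
  then show ?thesis
    unfolding V\<pi>_def Qs_def
    by (rule expectation_le_discounted_sum[OF rho_nonneg rho_sum tilted_nonneg tilted_sum_eq_1 gamma])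
qed

end
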